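(* Let $X$ be a Tychonoff space and $G$ a subgroup of $C_u(X)$ (with the subspace topology). Then $G$ is strictly R-bounded if and only if $G$ is countable.
   Context: $C(X)$ is the set of continuous real-valued functions on $X$, a topological group under pointwise addition; $C_u(X)$ is $C(X)$ with the topology of uniform convergence. For a topological group $G$ with identity $e$, the R-game is played as follows: in round $n\in\mathbb N$ player ONE chooses a neighborhood $U_n$ of $e$ and player TWO responds with a point $x_n\in G$; TWO wins if $G=\bigcup_n x_n\cdot U_n$. $G$ is strictly R-bounded if TWO has a winning strategy in this game. *)

theory Defs
  imports "HOL-Analysis.Analysis"
begin

definition tychonoff_space :: "'a topology \<Rightarrow> bool" where
  "tychonoff_space X \<longleftrightarrow> completely_regular_space X \<and> t1_space X"

text \<open>C(X): continuous real functions on X, normalised to 0 outside topspace X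
  (so that each function on X has exactly one representative).\<close>
definition cfun :: "'a topology \<Rightarrow> ('a \<Rightarrow> real) set" where
  "cfun X = {f. continuous_map X euclideanreal f \<and> (\<forall>x. x \<notin> topspace X \<longrightarrow> f x = 0)}"

definition cfun_subgroup :: "'a topology \<Rightarrow> ('a \<Rightarrow> real) set \<Rightarrow> bool" where
  "cfun_subgroup X G \<longleftrightarrow> G \<subseteq> cfun X \<and> (\<lambda>x. 0) \<in> G \<and>
     (\<forall>f\<in>G. \<forall>g\<in>G. (\<lambda>x. f x + g x) \<in> G) \<and> (\<forall>f\<in>G. (\<lambda>x. - f x) \<in> G)"

definition uball :: "'a topology \<Rightarrow> ('a \<Rightarrow> real) \<Rightarrow> real \<Rightarrow> ('a \<Rightarrow> real) set" where
  "uball X f e = {g. \<forall>x\<in>topspace X. \<bar>g x - f x\<bar> < e}"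

definition uopen_in :: "'a topology \<Rightarrow> ('a \<Rightarrow> real) set \<Rightarrow> ('a \<Rightarrow> real) set \<Rightarrow> bool" where
  "uopen_in X G V \<longleftrightarrow> V \<subseteq> G \<and> (\<forall>f\<in>V. \<exists>e>0. G \<inter> uball X f e \<subseteq> V)"

definition unbhd0 :: "'a topology \<Rightarrow> ('a \<Rightarrow> real) set \<Rightarrow> ('a \<Rightarrow> real) set \<Rightarrow> bool" where
  "unbhd0 X G U \<longleftrightarrow> U \<subseteq> G \<and> (\<exists>V. uopen_in X G V \<and> (\<lambda>x. 0) \<in> V \<and> V \<subseteq> U)"

text \<open>R-game on G: a strategy of TWO maps the list of ONE's moves so far
  [U_0,...,U_n] to TWO's point x_n.\<close>
definition strictly_R_bounded :: "'a topology \<Rightarrow> ('a \<Rightarrow> real) set \<Rightarrow> bool" where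
  "strictly_R_bounded X G \<longleftrightarrow>
     (\<exists>\<sigma> :: ('a \<Rightarrow> real) set list \<Rightarrow> ('a \<Rightarrow> real).
        \<forall>U :: nat \<Rightarrow> ('a \<Rightarrow> real) set. (\<forall>n. unbhd0 X G (U n)) \<longrightarrow>
          (\<forall>n. \<sigma> (map U [0..<Suc n]) \<in> G) \<and>
          G = (\<Union>n. (\<lambda>u x. \<sigma> (map U [0..<Suc n]) x + u x) ` U n))"

end

theory Submission
  imports Defs
begin

text \<open>
  If \<open>G\<close> is countable, TWO wins by simply enumerating \<open>G\<close>: in round \<open>n\<close> play the
  \<open>n\<close>-th element, which lies in \<open>x\<^sub>n + U\<^sub>n\<close> since \<open>0 \<in> U\<^sub>n\<close>.

  Conversely, fix a winning strategy \<open>\<sigma>\<close> and let ONE only play the uniform balls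
  \<open>W\<^sub>k\<close> of radius \<open>1/(k+1)\<close>, so that a play is a sequence of natural numbers.
  For every \<open>f \<in> G\<close> there is a finite position \<open>s\<close> such that, whichever \<open>k\<close> ONE
  plays next, \<open>f\<close> lies in the ball of radius \<open>1/(k+1)\<close> around TWO's answer:
  otherwise ONE could always choose a bad \<open>k\<close> and build a play in which \<open>f\<close> is never
  covered. Two functions sharing such a position are uniformly arbitrarily close, hence
  equal, so \<open>f \<mapsto> s\<close> injects \<open>G\<close> into the countable set of finite lists of naturals.
\<close>

lemma ex_position_good_for_all_moves:
  fixes P :: "nat list \<Rightarrow> nat \<Rightarrow> bool"
  assumes play_good: "\<And>c. \<exists>n. P (map c [0..<n]) (c n)"
  shows "\<exists>s. \<forall>k. P s k"
proof (rule ccontr)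
  assume "\<nexists>s. \<forall>k. P s k"
  then obtain bad where bad: "\<And>s. \<not> P s (bad s)"
    by metis
  define pos where "pos = rec_nat [] (\<lambda>_ s. s @ [bad s])"
  define c where "c n = bad (pos n)" for n
  have "map c [0..<n] = pos n" for n
    by (induction n) (simp_all add: pos_def c_def)
  with play_good[of c] bad show False
    unfolding c_def by metis
qed

lemma cfun_subgroup_add:
  "cfun_subgroup X G \<Longrightarrow> f \<in> G \<Longrightarrow> g \<in> G \<Longrightarrow> (\<lambda>x. f x + g x) \<in> G"
  unfolding cfun_subgroup_def by blast

lemma unbhd0_uball:
  assumes zero: "(\<lambda>x. 0) \<in> G" and "e > 0"
  shows "unbhd0 X G (G \<inter> uball X (\<lambda>x. 0) e)"
proof -
  \<comment> \<open>The ball itself need not be open: \<open>\<bar>g x\<bar> < e\<close> everywhere allows \<open>sup \<bar>g\<bar> = e\<close>.\<close>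
  define V where "V = {g \<in> G. \<exists>d<e. \<forall>x\<in>topspace X. \<bar>g x\<bar> \<le> d}"
  have "uopen_in X G V"
    unfolding uopen_in_def
  proof (intro conjI ballI)
    show "V \<subseteq> G"
      unfolding V_def by blast
  next
    fix f assume "f \<in> V"
    then obtain d where d: "d < e" "\<forall>x\<in>topspace X. \<bar>f x\<bar> \<le> d"
      unfolding V_def by blast
    have "\<bar>h x\<bar> \<le> d + (e - d) / 2"
      if "h \<in> uball X f ((e - d) / 2)" "x \<in> topspace X" for h x
    proof -
      have "\<bar>h x - f x\<bar> < (e - d) / 2" "\<bar>f x\<bar> \<le> d"
        using that d(2) unfolding uball_def by auto
      then show ?thesis
        by linarith
    qed
    moreover have "d + (e - d) / 2 < e"
      using d(1) by (simp add: field_simps)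
    ultimately have "G \<inter> uball X f ((e - d) / 2) \<subseteq> V"
      unfolding V_def by blast
    moreover have "(e - d) / 2 > 0"
      using d(1) by simp
    ultimately show "\<exists>r>0. G \<inter> uball X f r \<subseteq> V"
      by blast
  qed
  moreover have "(\<lambda>x. 0) \<in> V"
    using zero \<open>e > 0\<close> unfolding V_def by force
  moreover have "V \<subseteq> G \<inter> uball X (\<lambda>x. 0) e"
    unfolding V_def uball_def by force
  ultimately show ?thesis
    unfolding unbhd0_def by blast
qed

lemma cfun_eqI_uniformly_close:
  assumes "f \<in> cfun X" "g \<in> cfun X"
    and close: "\<And>k x. x \<in> topspace X \<Longrightarrow> \<bar>f x - g x\<bar> < 2 * inverse (real (Suc k))"
  shows "f = g"
proof
  fix x
  show "f x = g x"
  proof (cases "x \<in> topspace X")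
    case True
    have "\<bar>f x - g x\<bar> \<le> 0 + e" if "e > 0" for e
    proof -
      obtain k where "inverse (real (Suc k)) < e / 2"
        using reals_Archimedean \<open>e > 0\<close> half_gt_zero by blast
      with close[OF True, of k] show ?thesis
        by linarith
    qed
    then show ?thesis
      using field_le_epsilon[of "\<bar>f x - g x\<bar>" 0] by simp
  next
    case False
    with assms(1,2) show ?thesis
      unfolding cfun_def by simp
  qed
qed

lemma countable_imp_strictly_R_bounded:
  assumes G: "cfun_subgroup X G" and "countable G"
  shows "strictly_R_bounded X G"
proof -
  have "G \<noteq> {}"
    using G unfolding cfun_subgroup_def by blast
  then have enum: "range (from_nat_into G) = G"
    using \<open>countable G\<close> by (rule range_from_nat_into)
  define \<sigma> where "\<sigma> l = from_nat_into G (length l - 1)" for l :: "('a \<Rightarrow> real) set list"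
  have \<sigma>_play: "\<sigma> (map U [0..<Suc n]) = from_nat_into G n" for U :: "nat \<Rightarrow> _" and n
    unfolding \<sigma>_def by simp
  have "(\<forall>n. \<sigma> (map U [0..<Suc n]) \<in> G) \<and>
        G = (\<Union>n. (\<lambda>u x. \<sigma> (map U [0..<Suc n]) x + u x) ` U n)"
    if U: "\<forall>n. unbhd0 X G (U n)" for U
  proof (intro conjI equalityI subsetI)
    show "\<forall>n. \<sigma> (map U [0..<Suc n]) \<in> G"
      using enum \<sigma>_play by auto
  next
    fix h assume "h \<in> G"
    then obtain n where h: "h = from_nat_into G n"
      using enum by blast
    have "(\<lambda>x. 0) \<in> U n"
      using U unfolding unbhd0_def by blast
    then have "(\<lambda>x. h x + 0) \<in> (\<lambda>u x. \<sigma> (map U [0..<Suc n]) x + u x) ` U n"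
      unfolding \<sigma>_play h by (rule imageI)
    then show "h \<in> (\<Union>n. (\<lambda>u x. \<sigma> (map U [0..<Suc n]) x + u x) ` U n)"
      by auto
  next
    fix h assume "h \<in> (\<Union>n. (\<lambda>u x. \<sigma> (map U [0..<Suc n]) x + u x) ` U n)"
    then obtain n u where "u \<in> U n" and h: "h = (\<lambda>x. from_nat_into G n x + u x)"
      unfolding \<sigma>_play by blast
    moreover have "U n \<subseteq> G"
      using U unfolding unbhd0_def by blast
    ultimately show "h \<in> G"
      using cfun_subgroup_add[OF G] enum by blast
  qed
  then show ?thesis
    unfolding strictly_R_bounded_def by blast
qed

lemma strictly_R_bounded_imp_countable:
  assumes G: "cfun_subgroup X G" and "strictly_R_bounded X G"
  shows "countable G"
proof -
  obtain \<sigma> :: "('a \<Rightarrow> real) set list \<Rightarrow> ('a \<Rightarrow> real)" where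
    \<sigma>: "\<And>U. \<forall>n. unbhd0 X G (U n) \<Longrightarrow>
          (\<forall>n. \<sigma> (map U [0..<Suc n]) \<in> G) \<and>
          G = (\<Union>n. (\<lambda>u x. \<sigma> (map U [0..<Suc n]) x + u x) ` U n)"
    using assms(2) unfolding strictly_R_bounded_def by blast
  define W where "W k = G \<inter> uball X (\<lambda>x. 0) (inverse (real (Suc k)))" for k
  have W_nbhd: "unbhd0 X G (W k)" for k
    unfolding W_def using G by (intro unbhd0_uball) (simp_all add: cfun_subgroup_def)
  define good where "good f s k \<longleftrightarrow>
      (\<forall>x\<in>topspace X. \<bar>f x - \<sigma> (map W (s @ [k])) x\<bar> < inverse (real (Suc k)))" for f s k
  have "\<exists>s. \<forall>k. good f s k" if "f \<in> G" for f
  proof (rule ex_position_good_for_all_moves)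
    fix c :: "nat \<Rightarrow> nat"
    have "\<forall>n. unbhd0 X G (W (c n))"
      using W_nbhd by blast
    from conjunct2[OF \<sigma>[OF this]] \<open>f \<in> G\<close> obtain n u where "u \<in> W (c n)"
      and "f = (\<lambda>x. \<sigma> (map (\<lambda>i. W (c i)) [0..<Suc n]) x + u x)"
      by blast
    then have "good f (map c [0..<n]) (c n)"
      unfolding good_def W_def uball_def by (simp add: comp_def)
    then show "\<exists>n. good f (map c [0..<n]) (c n)" ..
  qed
  then obtain pos where pos: "\<And>f k. f \<in> G \<Longrightarrow> good f (pos f) k"
    by (metis (no_types))
  have "inj_on pos G"
  proof (rule inj_onI)
    fix f g assume "f \<in> G" "g \<in> G" "pos f = pos g"
    have "\<bar>f x - g x\<bar> < 2 * inverse (real (Suc k))" if "x \<in> topspace X" for k x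
    proof -
      let ?y = "\<sigma> (map W (pos f @ [k])) x"
      have "\<bar>f x - ?y\<bar> < inverse (real (Suc k))" "\<bar>g x - ?y\<bar> < inverse (real (Suc k))"
        using pos[OF \<open>f \<in> G\<close>, of k] pos[OF \<open>g \<in> G\<close>, of k] \<open>pos f = pos g\<close> that
        unfolding good_def by auto
      then show ?thesis
        by linarith
    qed
    moreover have "f \<in> cfun X" "g \<in> cfun X"
      using G \<open>f \<in> G\<close> \<open>g \<in> G\<close> unfolding cfun_subgroup_def by blast+
    ultimately show "f = g"
      using cfun_eqI_uniformly_close by blast
  qed
  moreover have "countable (pos ` G)"
    by (rule countable_subset[OF subset_UNIV]) simp
  ultimately show ?thesis
    by (rule countable_image_inj_on[rotated])
qed

theorem theorem2p10:
  fixes X :: "'a topology" and G :: "('a \<Rightarrow> real) set"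
  assumes "tychonoff_space X" and "cfun_subgroup X G"
  shows "strictly_R_bounded X G \<longleftrightarrow> countable G"
  using assms(2) strictly_R_bounded_imp_countable countable_imp_strictly_R_bounded by blast

end
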